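(* Let $G$ be a connected $m$-uniform hypergraph with path cover number $\mathrm{pc}(G)$. Then $s(G)\le m^{\mathrm{pc}(G)-1}$ and $\gamma(G)\le(\mathrm{pc}(G)-1)\mathrm{cl}(m)$.
   Context: Paths: a walk $v_1,e_1,\dots,v_l,e_l,v_{l+1}$ ($\{v_i,v_{i+1}\}\subseteq e_i$) is a path if its vertices and edges are distinct and $v_i\notin\bigcup_{j>i}e_j$ for $i\le l-1$; it covers $v_1,\dots,v_{l+1}$; a single vertex is a trivial path. Paths are disjoint if no edge of one contains a vertex covered by the other. A path cover is a set of pairwise disjoint paths covering all vertices; $\mathrm{pc}(G)$ is the minimum cardinality of a path cover. Adjacency tensor $\mathcal{A}(G)$ (vertices $v_1,\dots,v_n$): $a_{i_1\cdots i_m}=\frac1{(m-1)!}$ if $\{v_{i_1},\dots,v_{i_m}\}$ is an edge, else $0$. For a tensor $\mathcal{A}$: eigenvectors $\mathcal{A}x^{m-1}=\lambda x^{[m-1]}$, $x\ne0$, $(\mathcal{A}x^{m-1})_i=\sum a_{ii_2\cdots i_m}x_{i_2}\cdots x_{i_m}$; $\rho(\mathcal{A})$ spectral radius. Stabilizing index $s(\mathcal{A})$: number of invertible diagonal $D$ with $d_{11}=1$ and $\mathcal{A}=D^{-(m-1)}\mathcal{A}D$, $(D^{-(m-1)}\mathcal{A}D)_{i_1\cdots i_m}=d_{i_1}^{-(m-1)}a_{i_1\cdots i_m}d_{i_2}\cdots d_{i_m}$. Stabilizing dimension $\gamma(\mathcal{A})$: composition length of the $\mathbb{Z}_m$-module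 of eigenvectors $y$ for $\rho(\mathcal{A})$ normalized by $y_1=1$, with operation $y\circ\hat y=D_yD_{\hat y}v_p$, $D_y=\mathrm{diag}(y_i/|y_i|)$, $v_p$ the positive one. $s(G)=s(\mathcal{A}(G))$, $\gamma(G)=\gamma(\mathcal{A}(G))$. $\mathrm{cl}(m)$: number of prime factors of $m$ with multiplicity. *)

theory Defs
  imports Complex_Main "HOL-Library.Extended_Nat" "HOL-Computational_Algebra.Primes"
begin

text \<open>A hypergraph G has vertex set {0..<n} (vertex v_(i+1) of the paper is the
  natural number i) and edge set E, a set of vertex sets.\<close>

definition uniform_hypergraph :: "nat \<Rightarrow> nat \<Rightarrow> nat set set \<Rightarrow> bool" where
  "uniform_hypergraph m n E \<longleftrightarrow> (\<forall>e\<in>E. e \<subseteq> {..<n} \<and> card e = m)"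

definition hg_connected :: "nat \<Rightarrow> nat set set \<Rightarrow> bool" where
  "hg_connected n E \<longleftrightarrow>
     (\<forall>u<n. \<forall>v<n. (u, v) \<in> {(a, b). \<exists>e\<in>E. a \<in> e \<and> b \<in> e}\<^sup>*)"

text \<open>A path v_1,e_1,...,v_l,e_l,v_(l+1) is represented by the vertex list vs
  (length l+1) and the edge list es (length l); indices are 0-based.\<close>

definition is_path :: "nat \<Rightarrow> nat set set \<Rightarrow> nat list \<times> nat set list \<Rightarrow> bool" where
  "is_path n E P \<longleftrightarrow>
     (let vs = fst P; es = snd P in
        length vs = length es + 1 \<and>
        set vs \<subseteq> {..<n} \<and> set es \<subseteq> E \<and>
        (\<forall>i < length es. vs ! i \<in> es ! i \<and> vs ! (i + 1) \<in> es ! i) \<and>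
        distinct vs \<and> distinct es \<and>
        (\<forall>i j. i < j \<and> j < length es \<longrightarrow> vs ! i \<notin> es ! j))"

definition covered :: "nat list \<times> nat set list \<Rightarrow> nat set" where
  "covered P = set (fst P)"

definition paths_disjoint :: "nat list \<times> nat set list \<Rightarrow> nat list \<times> nat set list \<Rightarrow> bool" where
  "paths_disjoint P Q \<longleftrightarrow>
     (\<forall>e\<in>set (snd P). \<forall>v\<in>covered Q. v \<notin> e) \<and>
     (\<forall>e\<in>set (snd Q). \<forall>v\<in>covered P. v \<notin> e)"

definition path_cover :: "nat \<Rightarrow> nat set set \<Rightarrow> (nat list \<times> nat set list) set \<Rightarrow> bool" where
  "path_cover n E C \<longleftrightarrow>
     (\<forall>P\<in>C. is_path n E P) \<and>
     (\<forall>P\<in>C. \<forall>Q\<in>C. P \<noteq> Q \<longrightarrow> paths_disjoint P Q) \<and>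
     (\<Union>P\<in>C. covered P) = {..<n}"

definition pc :: "nat \<Rightarrow> nat set set \<Rightarrow> nat" where
  "pc n E = (LEAST k. \<exists>C. path_cover n E C \<and> card C = k)"

text \<open>A tensor is a function from index lists (i_1,...,i_m), each i_k < n, to complex
  numbers; vectors are functions nat \<Rightarrow> complex vanishing outside {..<n}.\<close>

type_synonym tensor = "nat list \<Rightarrow> complex"

definition index_lists :: "nat \<Rightarrow> nat \<Rightarrow> nat list set" where
  "index_lists k n = {is. length is = k \<and> set is \<subseteq> {..<n}}"

definition tensor_apply :: "nat \<Rightarrow> nat \<Rightarrow> tensor \<Rightarrow> (nat \<Rightarrow> complex) \<Rightarrow> nat \<Rightarrow> complex" where
  "tensor_apply m n A x i = (\<Sum>is\<in>index_lists (m - 1) n. A (i # is) * prod_list (map x is))"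

definition is_eigenpair :: "nat \<Rightarrow> nat \<Rightarrow> tensor \<Rightarrow> complex \<Rightarrow> (nat \<Rightarrow> complex) \<Rightarrow> bool" where
  "is_eigenpair m n A lam x \<longleftrightarrow>
     (\<forall>i. n \<le> i \<longrightarrow> x i = 0) \<and> (\<exists>i<n. x i \<noteq> 0) \<and>
     (\<forall>i<n. tensor_apply m n A x i = lam * x i ^ (m - 1))"

definition spectral_radius :: "nat \<Rightarrow> nat \<Rightarrow> tensor \<Rightarrow> real" where
  "spectral_radius m n A = Sup {cmod lam | lam. \<exists>x. is_eigenpair m n A lam x}"

text \<open>Stabilizing index: invertible diagonal matrices D = diag(d_0,...,d_(n-1)) with
  d_0 = 1 and D^(-(m-1)) A D = A (represented by d, with d i = 1 for i \<ge> n).\<close>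

definition stab_diagonals :: "nat \<Rightarrow> nat \<Rightarrow> tensor \<Rightarrow> (nat \<Rightarrow> complex) set" where
  "stab_diagonals m n A =
     {d. (\<forall>i<n. d i \<noteq> 0) \<and> (\<forall>i. n \<le> i \<longrightarrow> d i = 1) \<and> d 0 = 1 \<and>
         (\<forall>i js. i < n \<and> js \<in> index_lists (m - 1) n \<longrightarrow>
            inverse (d i ^ (m - 1)) * A (i # js) * prod_list (map d js) = A (i # js))}"

definition stab_index :: "nat \<Rightarrow> nat \<Rightarrow> tensor \<Rightarrow> enat" where
  "stab_index m n A =
     (if finite (stab_diagonals m n A) then enat (card (stab_diagonals m n A)) else \<infinity>)"

definition rho_eigvecs :: "nat \<Rightarrow> nat \<Rightarrow> tensor \<Rightarrow> (nat \<Rightarrow> complex) set" where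
  "rho_eigvecs m n A =
     {y. is_eigenpair m n A (complex_of_real (spectral_radius m n A)) y \<and> y 0 = 1}"

definition pos_eigvec :: "nat \<Rightarrow> nat \<Rightarrow> tensor \<Rightarrow> nat \<Rightarrow> complex" where
  "pos_eigvec m n A =
     (THE y. y \<in> rho_eigvecs m n A \<and> (\<forall>i<n. y i \<in> \<real> \<and> 0 < Re (y i)))"

definition eig_op :: "nat \<Rightarrow> nat \<Rightarrow> tensor \<Rightarrow> (nat \<Rightarrow> complex) \<Rightarrow> (nat \<Rightarrow> complex) \<Rightarrow> nat \<Rightarrow> complex" where
  "eig_op m n A y y' = (\<lambda>i. if i < n then
      (y i / complex_of_real (cmod (y i))) * (y' i / complex_of_real (cmod (y' i)))
        * pos_eigvec m n A i
     else 0)"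

text \<open>Z_m-submodules of the module (rho_eigvecs, \<circ>) with zero element v_p: subsets
  containing v_p and closed under \<circ> (the Z_m-scalar action k\<cdot>y is the k-fold \<circ>-power).\<close>

definition eig_submodule :: "nat \<Rightarrow> nat \<Rightarrow> tensor \<Rightarrow> (nat \<Rightarrow> complex) set \<Rightarrow> bool" where
  "eig_submodule m n A H \<longleftrightarrow>
     H \<subseteq> rho_eigvecs m n A \<and> pos_eigvec m n A \<in> H \<and>
     (\<forall>y\<in>H. \<forall>y'\<in>H. eig_op m n A y y' \<in> H) \<and>
     (\<forall>y\<in>H. \<forall>k::nat. ((\<lambda>z. eig_op m n A y z) ^^ k) (pos_eigvec m n A) \<in> H)"

text \<open>Composition length = supremum of lengths of strictly increasing chains
  H_0 \<subset> H_1 \<subset> ... \<subset> H_k of submodules.\<close>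

definition stab_dim :: "nat \<Rightarrow> nat \<Rightarrow> tensor \<Rightarrow> enat" where
  "stab_dim m n A =
     Sup {enat k | k. \<exists>Hs. length Hs = k + 1 \<and> (\<forall>H\<in>set Hs. eig_submodule m n A H) \<and>
                         (\<forall>i<k. Hs ! i \<subset> Hs ! (i + 1))}"

definition adj_tensor :: "nat \<Rightarrow> nat set set \<Rightarrow> tensor" where
  "adj_tensor m E = (\<lambda>is. if set is \<in> E then 1 / of_nat (fact (m - 1)) else 0)"

definition cl :: "nat \<Rightarrow> nat" where
  "cl m = size (prime_factorization m)"

end

(*
  Both quantities are controlled by root labellings: functions d on the vertices with d_0 = 1,
  d_v^m = 1 and product 1 over every edge. By connectivity, every stabilizing diagonal is one. So
  is the phase y / v_p of every eigenvector y of the spectral radius: the Perron vector v_p,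
  obtained by maximizing the Rayleigh quotient, satisfies |y| = v_p (equality in the triangle
  inequality), and the module operation becomes pointwise multiplication of phases.

  An edge e_i of a path contains no earlier vertex, so its product condition determines the
  label of v_i from those of later vertices; hence a root labelling is constant along every path.
  In a minimum path cover, a root labelling is therefore determined by its values at the last
  vertices of the pc(G) - 1 paths not covering vertex 0. This embeds the stabilizing diagonals
  into a group of order m^(pc(G)-1) and turns a strict chain of submodules into a strict chain of
  subgroups, whose orders form a strict divisibility chain by Lagrange's theorem; its length is at
  most the number (pc(G) - 1) cl(m) of prime factors of m^(pc(G)-1).
*)
theory Submission
  imports Defs "HOL-Analysis.Analysis" "HOL-Algebra.Coset" "HOL-Combinatorics.Multiset_Permutations"
begin

lemma size_prime_factorization_dvd_mono:
  fixes a b :: nat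
  assumes "a dvd b" "b \<noteq> 0"
  shows "size (prime_factorization a) \<le> size (prime_factorization b)"
proof -
  have "a \<noteq> 0" using assms by auto
  then have "prime_factorization a \<subseteq># prime_factorization b"
    using assms prime_factorization_subset_iff_dvd by blast
  then show ?thesis by (rule size_mset_mono)
qed

lemma size_prime_factorization_dvd_strict_mono:
  fixes a b :: nat
  assumes "a dvd b" "a < b" "0 < a"
  shows "size (prime_factorization a) < size (prime_factorization b)"
proof -
  obtain q where q: "b = a * q" using assms by (auto elim: dvdE)
  then have "q \<noteq> 0" "q \<noteq> 1" using assms by auto
  then have "prime_factorization q \<noteq> {#}" by (simp add: prime_factorization_empty_iff)
  moreover have "prime_factorization b = prime_factorization a + prime_factorization q"
    using q \<open>q \<noteq> 0\<close> assms by (simp add: prime_factorization_mult)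
  ultimately show ?thesis by (simp add: nonempty_has_size)
qed

lemma size_prime_factorization_power:
  fixes m :: nat
  assumes "m \<noteq> 0"
  shows "size (prime_factorization (m ^ k)) = k * size (prime_factorization m)"
  by (induction k) (use assms in \<open>simp_all add: prime_factorization_mult\<close>)

lemma dvd_chain_length_le:
  fixes c :: "nat \<Rightarrow> nat"
  assumes "\<And>i. i < k \<Longrightarrow> c i dvd c (Suc i) \<and> c i < c (Suc i)" and "\<And>i. i \<le> k \<Longrightarrow> 0 < c i"
  shows "k \<le> size (prime_factorization (c k))"
  using assms
proof (induction k)
  case (Suc k)
  then have "k \<le> size (prime_factorization (c k))" by simp
  moreover have "size (prime_factorization (c k)) < size (prime_factorization (c (Suc k)))"
    using Suc.prems by (intro size_prime_factorization_dvd_strict_mono) auto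
  ultimately show ?case by simp
qed simp

lemma (in group) card_subgroup_dvd:
  assumes "subgroup H G" "subgroup K G" "H \<subseteq> K"
  shows "card H dvd card K"
proof -
  interpret K: group "G\<lparr>carrier := K\<rparr>" using subgroup.subgroup_is_group[OF assms(2)] is_group .
  have "subgroup H (G\<lparr>carrier := K\<rparr>)" using subgroup_incl assms by blast
  then have "card (rcosets\<^bsub>G\<lparr>carrier := K\<rparr>\<^esub> H) * card H = card K"
    using K.lagrange by (simp add: order_def)
  then show ?thesis by (metis dvd_triv_right)
qed

lemma (in group) subgroup_chain_length_le:
  assumes "finite (carrier G)"
    and "\<And>i. i \<le> k \<Longrightarrow> subgroup (H i) G" and "\<And>i. i < k \<Longrightarrow> H i \<subset> H (Suc i)"
  shows "k \<le> size (prime_factorization (order G))"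
proof -
  have fin: "finite (H i)" if "i \<le> k" for i
    using assms that subgroup.subset finite_subset by metis
  have "k \<le> size (prime_factorization (card (H k)))"
  proof (rule dvd_chain_length_le)
    show "card (H i) dvd card (H (Suc i)) \<and> card (H i) < card (H (Suc i))" if "i < k" for i
    proof
      show "card (H i) dvd card (H (Suc i))"
        by (rule card_subgroup_dvd) (use that assms in auto)
      show "card (H i) < card (H (Suc i))"
        by (rule psubset_card_mono) (use that assms fin in auto)
    qed
    show "0 < card (H i)" if "i \<le> k" for i
      using that assms subgroup.finite_imp_card_positive by blast
  qed
  also have "\<dots> \<le> size (prime_factorization (order G))"
  proof (rule size_prime_factorization_dvd_mono)
    show "card (H k) dvd order G"
      unfolding order_def using assms(2) subgroup.subset
      by (intro card_subgroup_dvd subgroup_self) auto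
    show "order G \<noteq> 0" using assms(1) order_gt_0_iff_finite by simp
  qed
  finally show ?thesis .
qed

lemma sum_mono_eq_imp_eq:
  fixes f g :: "'a \<Rightarrow> 'b::ordered_cancel_comm_monoid_add"
  assumes "finite A" "\<And>x. x \<in> A \<Longrightarrow> f x \<le> g x" "sum f A = sum g A" "x \<in> A"
  shows "f x = g x"
  using sum_strict_mono_ex1[of A f g] assms by (metis order_less_irrefl order.not_eq_order_implies_strict)

lemma prod_mono_eq_imp_eq:
  fixes f g :: "'a \<Rightarrow> 'b::linordered_semidom"
  assumes "finite A" "\<And>x. x \<in> A \<Longrightarrow> 0 \<le> f x \<and> f x \<le> g x" "\<And>x. x \<in> A \<Longrightarrow> 0 < g x"
    and "prod f A = prod g A" "x \<in> A"
  shows "f x = g x"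
  using prod_mono_strict[of x A f g] assms by (metis order_less_irrefl order.not_eq_order_implies_strict)

lemma unimodular_weighted_sum_eq_imp_one:
  fixes u :: "'a \<Rightarrow> complex" and w :: "'a \<Rightarrow> real"
  assumes "finite A" "\<And>x. x \<in> A \<Longrightarrow> cmod (u x) = 1" "\<And>x. x \<in> A \<Longrightarrow> 0 < w x"
    and "(\<Sum>x\<in>A. u x * of_real (w x)) = of_real (\<Sum>x\<in>A. w x)" "x \<in> A"
  shows "u x = 1"
proof -
  have "(\<Sum>x\<in>A. Re (u x) * w x) = (\<Sum>x\<in>A. w x)"
    using arg_cong[OF assms(4), of Re] by (simp add: Re_sum)
  moreover have "Re (u x) * w x \<le> w x" if "x \<in> A" for x
    using assms(2,3)[OF that] complex_Re_le_cmod[of "u x"] by (simp add: mult_left_le_one_le)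
  ultimately have "Re (u x) * w x = w x"
    using assms(1,5) sum_mono_eq_imp_eq[of A "\<lambda>x. Re (u x) * w x" w] by blast
  then have "cmod (u x) = Re (u x)" using assms(2,3,5) by force
  then have "u x \<in> \<real>\<^sub>\<ge>\<^sub>0" by (simp add: norm_eq_Re_iff)
  then show ?thesis using assms(2)[OF assms(5)] by (auto simp: nonneg_Reals_def)
qed

definition root_functions :: "nat \<Rightarrow> 'a set \<Rightarrow> ('a \<Rightarrow> complex) set" where
  "root_functions m T = {f. (\<forall>v\<in>T. f v ^ m = 1) \<and> (\<forall>v. v \<notin> T \<longrightarrow> f v = 1)}"

definition root_functions_group :: "nat \<Rightarrow> 'a set \<Rightarrow> ('a \<Rightarrow> complex) monoid" where
  "root_functions_group m T =
     \<lparr>carrier = root_functions m T, mult = (\<lambda>f g v. f v * g v), one = (\<lambda>v. 1)\<rparr>"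

definition restrict_to :: "'a set \<Rightarrow> ('a \<Rightarrow> complex) \<Rightarrow> 'a \<Rightarrow> complex" where
  "restrict_to T d v = (if v \<in> T then d v else 1)"

lemma root_functions_group_simps [simp]:
  "carrier (root_functions_group m T) = root_functions m T"
  "f \<otimes>\<^bsub>root_functions_group m T\<^esub> g = (\<lambda>v. f v * g v)"
  "\<one>\<^bsub>root_functions_group m T\<^esub> = (\<lambda>v. 1)"
  unfolding root_functions_group_def by simp_all

lemma card_root_functions:
  assumes "finite T" "0 < m"
  shows "card (root_functions m T) = m ^ card T" "finite (root_functions m T)"
proof -
  define R where "R = {z::complex. z ^ m = 1}"
  have bij: "bij_betw (\<lambda>f. restrict f T) (root_functions m T) (PiE T (\<lambda>_. R))"
  proof (rule bij_betwI[where g = "\<lambda>g v. if v \<in> T then g v else 1"])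
    show "(\<lambda>f. restrict f T) \<in> root_functions m T \<rightarrow> PiE T (\<lambda>_. R)"
      unfolding root_functions_def R_def by auto
    show "(\<lambda>g v. if v \<in> T then g v else 1) \<in> PiE T (\<lambda>_. R) \<rightarrow> root_functions m T"
      unfolding root_functions_def R_def by auto
    show "(\<lambda>v. if v \<in> T then restrict f T v else 1) = f" if "f \<in> root_functions m T" for f
      using that unfolding root_functions_def by auto
    show "restrict (\<lambda>v. if v \<in> T then g v else 1) T = g" if "g \<in> PiE T (\<lambda>_. R)" for g
      using that by (auto simp: PiE_def extensional_def restrict_def)
  qed
  have "card (PiE T (\<lambda>_. R)) = m ^ card T"
    using assms by (simp add: card_PiE R_def card_roots_unity_eq)
  then show "card (root_functions m T) = m ^ card T" using bij_betw_same_card[OF bij] by simp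
  have "finite (PiE T (\<lambda>_. R))" using assms by (simp add: finite_PiE R_def finite_roots_unity)
  then show "finite (root_functions m T)" using bij_betw_finite[OF bij] by simp
qed

lemma root_functions_power:
  assumes "f \<in> root_functions m T"
  shows "(\<lambda>v. f v ^ k) \<in> root_functions m T"
proof -
  have "(z ^ k) ^ m = (z ^ m) ^ k" for z :: complex by (metis power_mult mult.commute)
  then show ?thesis using assms unfolding root_functions_def by auto
qed

lemma root_functions_power_pred_mult:
  assumes "0 < m" "f \<in> root_functions m T"
  shows "(\<lambda>v. f v ^ (m - 1) * f v) = (\<lambda>v. 1)"
proof
  fix v
  have "f v ^ (m - 1) * f v = f v ^ m" using assms(1) by (simp add: power_Suc2[symmetric])
  then show "f v ^ (m - 1) * f v = 1" using assms(2) unfolding root_functions_def by (cases "v \<in> T") auto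
qed

lemma group_root_functions_group:
  assumes "0 < m"
  shows "group (root_functions_group m T)"
proof (rule groupI)
  show "\<exists>y\<in>carrier (root_functions_group m T). y \<otimes>\<^bsub>root_functions_group m T\<^esub> x = \<one>\<^bsub>root_functions_group m T\<^esub>"
    if "x \<in> carrier (root_functions_group m T)" for x
  proof
    show "(\<lambda>v. x v ^ (m - 1)) \<in> carrier (root_functions_group m T)"
      using that root_functions_power by simp
    show "(\<lambda>v. x v ^ (m - 1)) \<otimes>\<^bsub>root_functions_group m T\<^esub> x = \<one>\<^bsub>root_functions_group m T\<^esub>"
      using that assms root_functions_power_pred_mult by simp
  qed
qed (auto simp: root_functions_def power_mult_distrib mult.assoc)

lemma subgroup_root_functions_groupI:
  assumes "0 < m" "K \<subseteq> root_functions m T" "(\<lambda>v. 1) \<in> K"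
    and "\<And>f g. f \<in> K \<Longrightarrow> g \<in> K \<Longrightarrow> (\<lambda>v. f v * g v) \<in> K"
    and "\<And>f. f \<in> K \<Longrightarrow> (\<lambda>v. f v ^ (m - 1)) \<in> K"
  shows "subgroup K (root_functions_group m T)"
proof -
  interpret group "root_functions_group m T" using group_root_functions_group[OF assms(1)] .
  have "inv\<^bsub>root_functions_group m T\<^esub> f = (\<lambda>v. f v ^ (m - 1))" if "f \<in> K" for f
    using that assms root_functions_power[of f] root_functions_power_pred_mult[of m f]
    by (intro inv_equality) auto
  then show ?thesis using assms by (intro subgroupI) auto
qed

lemma finite_index_lists: "finite (index_lists k n)"
  unfolding index_lists_def using finite_lists_length_eq[of "{..<n}" k] by (simp add: conj_commute)

lemma index_lists_covering_edge:
  assumes "uniform_hypergraph m n E" "e \<in> E" "i \<in> e"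
  shows "{js \<in> index_lists (m - 1) n. set (i # js) = e} = permutations_of_set (e - {i})"
proof -
  have e: "finite e" "card e = m" "e \<subseteq> {..<n}"
    using assms unfolding uniform_hypergraph_def by (auto intro: finite_subset)
  have "0 < m" using e assms(3) card_gt_0_iff by blast
  have "distinct (i # js)" if "length js = m - 1" "set (i # js) = e" for js
    using that e \<open>0 < m\<close> by (intro card_distinct) simp
  moreover have "length js = m - 1" if "distinct js" "set js = e - {i}" for js
    using that e assms(3) by (metis distinct_card card_Diff_singleton)
  ultimately show ?thesis
    using e assms(3) unfolding index_lists_def permutations_of_set_def by auto
qed

lemma tensor_apply_adj_tensor:
  assumes U: "uniform_hypergraph m n E"
  shows "tensor_apply m n (adj_tensor m E) x i = (\<Sum>e\<in>{e\<in>E. i \<in> e}. \<Prod>j\<in>e - {i}. x j)"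
proof -
  let ?I = "index_lists (m - 1) n" and ?c = "1 / of_nat (fact (m - 1)) :: complex"
  have finE: "finite E"
    using U unfolding uniform_hypergraph_def by (intro finite_subset[of E "Pow {..<n}"]) auto
  have "tensor_apply m n (adj_tensor m E) x i
      = (\<Sum>js\<in>?I. if set (i # js) \<in> E then ?c * prod_list (map x js) else 0)"
    unfolding tensor_apply_def adj_tensor_def by (intro sum.cong) auto
  also have "\<dots> = (\<Sum>js\<in>{js\<in>?I. set (i # js) \<in> E}. ?c * prod_list (map x js))"
    using finite_index_lists by (rule sum.inter_filter[symmetric])
  also have "\<dots> = (\<Sum>e\<in>{e\<in>E. i \<in> e}.
      \<Sum>js\<in>{js. js \<in> {js\<in>?I. set (i # js) \<in> E} \<and> set (i # js) = e}. ?c * prod_list (map x js))"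
    by (rule sum.group[symmetric]) (use finite_index_lists finE in auto)
  also have "\<dots> = (\<Sum>e\<in>{e\<in>E. i \<in> e}. \<Sum>js\<in>{js\<in>?I. set (i # js) = e}. ?c * prod_list (map x js))"
    by (intro sum.cong refl arg_cong[where f = "sum _"]) auto
  also have "\<dots> = (\<Sum>e\<in>{e\<in>E. i \<in> e}. \<Prod>j\<in>e - {i}. x j)"
  proof (rule sum.cong[OF refl])
    fix e assume e: "e \<in> {e\<in>E. i \<in> e}"
    then have card: "card (e - {i}) = m - 1" and fin: "finite (e - {i})"
      using U unfolding uniform_hypergraph_def by (auto intro: finite_subset)
    have "(\<Sum>js\<in>{js\<in>?I. set (i # js) = e}. ?c * prod_list (map x js))
        = (\<Sum>js\<in>permutations_of_set (e - {i}). ?c * (\<Prod>j\<in>e - {i}. x j))"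
      using index_lists_covering_edge[OF U] e
      by (intro sum.cong) (auto simp: permutations_of_set_def prod.distinct_set_conv_list[symmetric])
    also have "\<dots> = (\<Prod>j\<in>e - {i}. x j)" using card fin by simp
    finally show "(\<Sum>js\<in>{js\<in>?I. set (i # js) = e}. ?c * prod_list (map x js)) = (\<Prod>j\<in>e - {i}. x j)" .
  qed
  finally show ?thesis .
qed

locale connected_uniform_hypergraph =
  fixes m n :: nat and E :: "nat set set"
  assumes two_le_m: "2 \<le> m" and n_pos: "0 < n"
    and uniform: "uniform_hypergraph m n E" and connected: "hg_connected n E"
begin

lemma finite_edges: "finite E"
  using uniform unfolding uniform_hypergraph_def by (intro finite_subset[of E "Pow {..<n}"]) auto

lemma edge_subset: "e \<in> E \<Longrightarrow> e \<subseteq> {..<n}"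
  and card_edge: "e \<in> E \<Longrightarrow> card e = m"
  and finite_edge: "e \<in> E \<Longrightarrow> finite e"
  using uniform unfolding uniform_hypergraph_def by (auto intro: finite_subset)

lemma card_edge_remove: "e \<in> E \<Longrightarrow> i \<in> e \<Longrightarrow> card (e - {i}) = m - 1"
  using card_edge finite_edge by (simp add: card_Diff_singleton)

lemma power_m_eq: "x ^ m = x * (x :: 'a::monoid_mult) ^ (m - 1)"
  using two_le_m by (metis Suc_pred' less_le_trans pos2 power_Suc)

lemma prod_edge_remove:
  fixes g :: "nat \<Rightarrow> 'a::comm_monoid_mult"
  shows "e \<in> E \<Longrightarrow> i \<in> e \<Longrightarrow> prod g e = g i * prod g (e - {i})"
  using finite_edge by (simp add: prod.remove)

lemma connected_induct:
  assumes "u < n" "v < n" "P u"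
    and step: "\<And>a b e. e \<in> E \<Longrightarrow> a \<in> e \<Longrightarrow> b \<in> e \<Longrightarrow> P a \<Longrightarrow> P b"
  shows "P v"
proof -
  have "(u, v) \<in> {(a, b). \<exists>e\<in>E. a \<in> e \<and> b \<in> e}\<^sup>*"
    using connected assms(1,2) unfolding hg_connected_def by blast
  then show ?thesis
    by (induction rule: rtrancl_induct) (use assms(3) step in blast)+
qed

lemma edge_crossing:
  assumes "u < n" "v < n" "u \<in> A" "v \<notin> A"
  obtains e a b where "e \<in> E" "a \<in> e" "b \<in> e" "a \<in> A" "b \<notin> A"
  using connected_induct[OF assms(1,2), of "\<lambda>w. w \<in> A"] assms(3,4) by blast

lemma tensor_apply_adj:
  "tensor_apply m n (adj_tensor m E) x i = (\<Sum>e\<in>{e\<in>E. i \<in> e}. \<Prod>j\<in>e - {i}. x j)"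
  using tensor_apply_adj_tensor[OF uniform] .

definition stabilizing :: "(nat \<Rightarrow> complex) \<Rightarrow> bool" where
  "stabilizing d \<longleftrightarrow> (\<forall>i<n. d i \<noteq> 0) \<and> d 0 = 1 \<and>
     (\<forall>e\<in>E. \<forall>i\<in>e. (\<Prod>j\<in>e - {i}. d j) = d i ^ (m - 1))"

definition root_labelling :: "(nat \<Rightarrow> complex) \<Rightarrow> bool" where
  "root_labelling d \<longleftrightarrow> (\<forall>i<n. d i ^ m = 1) \<and> d 0 = 1 \<and> (\<forall>e\<in>E. (\<Prod>j\<in>e. d j) = 1)"

lemma stab_diagonals_stabilizing:
  assumes "d \<in> stab_diagonals m n (adj_tensor m E)"
  shows "stabilizing d"
proof -
  have nz: "\<forall>i<n. d i \<noteq> 0" using assms unfolding stab_diagonals_def by auto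
  have "(\<Prod>j\<in>e - {i}. d j) = d i ^ (m - 1)" if e: "e \<in> E" "i \<in> e" for e i
  proof -
    define js where "js = sorted_list_of_set (e - {i})"
    have js: "set js = e - {i}" "distinct js"
      using finite_edge[OF e(1)] unfolding js_def by auto
    then have "js \<in> index_lists (m - 1) n" "i < n"
      using e edge_subset card_edge_remove unfolding index_lists_def by (auto simp: distinct_card[symmetric])
    then have "inverse (d i ^ (m - 1)) * adj_tensor m E (i # js) * prod_list (map d js)
        = adj_tensor m E (i # js)"
      using assms unfolding stab_diagonals_def by blast
    moreover have "adj_tensor m E (i # js) = 1 / of_nat (fact (m - 1))"
      using js e unfolding adj_tensor_def by (simp add: insert_absorb)
    ultimately have "inverse (d i ^ (m - 1)) * prod_list (map d js) = 1" by (simp add: field_simps)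
    then have "prod_list (map d js) = d i ^ (m - 1)" using nz \<open>i < n\<close> by (simp add: field_simps)
    then show ?thesis using js by (metis prod.distinct_set_conv_list)
  qed
  then show ?thesis using nz assms unfolding stabilizing_def stab_diagonals_def by auto
qed

lemma stabilizing_root_labelling:
  assumes "stabilizing d"
  shows "root_labelling d"
proof -
  have edge_prod: "(\<Prod>j\<in>e. d j) = d i ^ m" if "e \<in> E" "i \<in> e" for e i
    using assms that prod_edge_remove[OF that, of d] power_m_eq[of "d i"]
    unfolding stabilizing_def by simp
  have root: "d v ^ m = 1" if "v < n" for v
  proof -
    have "d v ^ m = d 0 ^ m"
      by (rule connected_induct[OF n_pos that]) (use edge_prod in metis)+
    then show ?thesis using assms unfolding stabilizing_def by simp
  qed
  have "(\<Prod>j\<in>e. d j) = 1" if e: "e \<in> E" for e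
  proof -
    obtain i where "i \<in> e" using card_edge[OF e] two_le_m by fastforce
    then show ?thesis using edge_prod[OF e] root edge_subset[OF e] by auto
  qed
  then show ?thesis using root assms unfolding root_labelling_def stabilizing_def by auto
qed

end

section \<open>Path covers\<close>

definition path_ends :: "(nat list \<times> nat set list) set \<Rightarrow> nat list \<times> nat set list \<Rightarrow> nat set" where
  "path_ends C P0 = (\<lambda>P. last (fst P)) ` (C - {P0})"

lemma is_path_last:
  assumes "is_path n E P"
  shows "last (fst P) \<in> set (fst P)" "last (fst P) < n"
proof -
  have "fst P \<noteq> []" using assms unfolding is_path_def Let_def by auto
  then show "last (fst P) \<in> set (fst P)" by simp
  then show "last (fst P) < n" using assms unfolding is_path_def Let_def by auto
qed

lemma is_path_edge_later_vertex:
  assumes "is_path n E (vs, es)" "es ! j \<subseteq> set vs" "j < length es" "u \<in> es ! j - {vs ! j}"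
  shows "\<exists>k. j < k \<and> k \<le> length es \<and> u = vs ! k"
proof -
  obtain k where k: "k < length vs" "u = vs ! k" using assms(2,4) by (metis DiffD1 in_set_conv_nth subsetD)
  have "\<not> k < j" using assms(1,3,4) k unfolding is_path_def Let_def by auto
  moreover have "k \<noteq> j" using assms(4) k by auto
  ultimately show ?thesis using k assms(1) unfolding is_path_def Let_def by (intro exI[of _ k]) auto
qed

lemma path_cover_is_path: "path_cover n E C \<Longrightarrow> P \<in> C \<Longrightarrow> is_path n E P"
  unfolding path_cover_def by auto

lemma path_cover_covers: "path_cover n E C \<Longrightarrow> v < n \<Longrightarrow> \<exists>P\<in>C. v \<in> set (fst P)"
  unfolding path_cover_def covered_def by auto

lemma path_cover_finite:
  assumes PC: "path_cover n E C"
  shows "finite C"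
proof -
  have "inj_on covered C"
  proof
    fix P Q assume PQ: "P \<in> C" "Q \<in> C" "covered P = covered Q"
    show "P = Q"
    proof (rule ccontr)
      assume "P \<noteq> Q"
      then have disj: "paths_disjoint P Q" using PC PQ unfolding path_cover_def by auto
      have "snd R = []" if "R \<in> C" "covered R = covered S" "paths_disjoint R S" for R S
      proof (rule ccontr)
        assume "snd R \<noteq> []"
        then have "fst R ! 0 \<in> snd R ! 0" "fst R ! 0 \<in> set (fst R)" "snd R ! 0 \<in> set (snd R)"
          using path_cover_is_path[OF PC that(1)] unfolding is_path_def Let_def by auto
        then show False using that(2,3) unfolding paths_disjoint_def covered_def by auto
      qed
      then have "snd P = []" "snd Q = []" using PQ disj by (auto simp: paths_disjoint_def)
      then have "length (fst P) = 1" "length (fst Q) = 1"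
        using path_cover_is_path[OF PC] PQ unfolding is_path_def Let_def by auto
      then obtain a b where "fst P = [a]" "fst Q = [b]"
        by (metis One_nat_def length_0_conv length_Suc_conv)
      then have "fst P = fst Q" using PQ(3) unfolding covered_def by simp
      then show False using \<open>P \<noteq> Q\<close> \<open>snd P = []\<close> \<open>snd Q = []\<close> by (simp add: prod_eq_iff)
    qed
  qed
  moreover have "covered ` C \<subseteq> Pow {..<n}" using PC unfolding path_cover_def by auto
  ultimately show ?thesis by (metis finite_Pow_iff finite_lessThan finite_subset inj_on_finite)
qed

lemma path_cover_edge_subset:
  assumes PC: "path_cover n E C" and P: "P \<in> C" and e: "e \<in> set (snd P)"
    and U: "uniform_hypergraph m n E"
  shows "e \<subseteq> set (fst P)"
proof
  fix v assume v: "v \<in> e"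
  have "e \<in> E" using path_cover_is_path[OF PC P] e unfolding is_path_def Let_def by auto
  then have "v < n" using v U unfolding uniform_hypergraph_def by auto
  then obtain Q where Q: "Q \<in> C" "v \<in> set (fst Q)" using path_cover_covers[OF PC] by blast
  then have "Q = P" using PC P e v unfolding path_cover_def paths_disjoint_def covered_def by blast
  then show "v \<in> set (fst P)" using Q by simp
qed

lemma card_path_ends:
  assumes "path_cover n E C" "P0 \<in> C"
  shows "path_ends C P0 \<subseteq> {..<n}" "card (path_ends C P0) \<le> card C - 1"
proof -
  show "path_ends C P0 \<subseteq> {..<n}"
    unfolding path_ends_def using assms is_path_last path_cover_is_path by blast
  have "card (path_ends C P0) \<le> card (C - {P0})"
    unfolding path_ends_def using path_cover_finite[OF assms(1)] by (intro card_image_le) auto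
  then show "card (path_ends C P0) \<le> card C - 1"
    using assms path_cover_finite by (simp add: card_Diff_singleton)
qed

context connected_uniform_hypergraph
begin

lemma path_constant_from_last:
  fixes g :: "nat \<Rightarrow> 'a::field"
  assumes path: "is_path n E P" and edges: "\<And>e. e \<in> set (snd P) \<Longrightarrow> e \<subseteq> set (fst P)"
    and c: "c \<noteq> 0" and prod_edges: "\<And>e. e \<in> set (snd P) \<Longrightarrow> prod g e = c ^ m"
    and last: "g (last (fst P)) = c"
    and v: "v \<in> set (fst P)"
  shows "g v = c"
proof -
  obtain vs es where P: "P = (vs, es)" by (cases P)
  have len: "length vs = length es + 1" and es: "set es \<subseteq> E"
    and vertex_in_edge: "\<And>i. i < length es \<Longrightarrow> vs ! i \<in> es ! i"
    using path unfolding P is_path_def Let_def by auto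
  have "g (vs ! i) = c" if "i \<le> length es" for i
    using that
  proof (induction "length es - i" arbitrary: i rule: less_induct)
    case less
    show ?case
    proof (cases "i = length es")
      case True
      have "vs \<noteq> []" using len by auto
      then have "last vs = vs ! length es" using len by (simp add: last_conv_nth)
      then show ?thesis using last P True by simp
    next
      case False
      then have i: "i < length es" using less.prems by simp
      let ?e = "es ! i"
      have e: "?e \<in> E" "vs ! i \<in> ?e" using es nth_mem[OF i] vertex_in_edge[OF i] by auto
      have "g u = c" if "u \<in> ?e - {vs ! i}" for u
        using is_path_edge_later_vertex[OF path[unfolded P] _ i that] edges[of ?e] i P less.hyps by force
      then have "prod g (?e - {vs ! i}) = c ^ (m - 1)"
        using card_edge_remove[OF e] by simp
      moreover have "prod g ?e = c * c ^ (m - 1)"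
        using prod_edges[of ?e] i P power_m_eq by simp
      ultimately have "g (vs ! i) * c ^ (m - 1) = c * c ^ (m - 1)"
        using prod_edge_remove[OF e, of g] by simp
      then show ?thesis using c by simp
    qed
  qed
  moreover obtain i where "i < length vs" "v = vs ! i" using v P by (metis fst_conv in_set_conv_nth)
  ultimately show ?thesis using len by simp
qed

lemma root_labelling_nonzero:
  assumes "root_labelling d" "v < n"
  shows "d v \<noteq> 0"
proof
  assume "d v = 0"
  then have "d v ^ m = 0" using two_le_m by simp
  then show False using assms unfolding root_labelling_def by simp
qed

lemma root_labellings_eq_on_path_ends:
  assumes PC: "path_cover n E C" and P0: "P0 \<in> C" "0 \<in> set (fst P0)"
    and d: "root_labelling d" "root_labelling d'"
    and ends: "\<forall>u\<in>path_ends C P0. d u = d' u" and v: "v < n"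
  shows "d v = d' v"
proof -
  define h where "h u = d' u / d u" for u
  have h_root: "h u ^ m = 1" and h_nonzero: "h u \<noteq> 0" if "u < n" for u
    using d that root_labelling_nonzero unfolding h_def root_labelling_def by (auto simp: power_divide)
  have h_edge: "prod h e = 1" if "e \<in> E" for e
    using d that unfolding h_def root_labelling_def by (simp add: prod_dividef)
  have const: "h u = h (last (fst P))" if P: "P \<in> C" and u: "u \<in> set (fst P)" for P u
  proof (rule path_constant_from_last[OF path_cover_is_path[OF PC P] _ _ _ refl u])
    have path: "is_path n E P" using PC P by (rule path_cover_is_path)
    show "e \<subseteq> set (fst P)" if "e \<in> set (snd P)" for e
      using path_cover_edge_subset[OF PC P that uniform] .
    show "h (last (fst P)) \<noteq> 0" using h_nonzero is_path_last[OF path] by blast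
    show "prod h e = h (last (fst P)) ^ m" if "e \<in> set (snd P)" for e
    proof -
      have "e \<in> E" using that path unfolding is_path_def Let_def by auto
      then show ?thesis using h_edge h_root is_path_last(2)[OF path] by simp
    qed
  qed
  obtain P where P: "P \<in> C" "v \<in> set (fst P)" using path_cover_covers[OF PC v] by blast
  have "h v = 1"
  proof (cases "P = P0")
    case True
    then show ?thesis using const[OF P] const[OF P0] d unfolding h_def root_labelling_def by simp
  next
    case False
    then have "last (fst P) \<in> path_ends C P0" using P unfolding path_ends_def by blast
    moreover have "last (fst P) < n" using is_path_last path_cover_is_path[OF PC P(1)] by blast
    ultimately have "h (last (fst P)) = 1"
      using ends root_labelling_nonzero[OF d(2)] unfolding h_def by simp
    then show ?thesis using const[OF P] by simp
  qed
  then show ?thesis using root_labelling_nonzero[OF d(1) v] unfolding h_def by simp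
qed

definition determining_set :: "nat set \<Rightarrow> bool" where
  "determining_set T \<longleftrightarrow> T \<subseteq> {..<n} \<and>
     (\<forall>d d'. root_labelling d \<longrightarrow> root_labelling d' \<longrightarrow> (\<forall>u\<in>T. d u = d' u) \<longrightarrow> (\<forall>v<n. d v = d' v))"

lemma determining_set_path_cover:
  assumes "\<exists>C. path_cover n E C"
  obtains T where "determining_set T" "card T \<le> pc n E - 1"
proof -
  obtain C where C: "path_cover n E C" "card C = pc n E"
    using LeastI_ex[of "\<lambda>k. \<exists>C. path_cover n E C \<and> card C = k"] assms unfolding pc_def by blast
  obtain P0 where P0: "P0 \<in> C" "0 \<in> set (fst P0)" using path_cover_covers[OF C(1) n_pos] by blast
  show thesis
  proof (rule that)
    show "determining_set (path_ends C P0)"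
      unfolding determining_set_def
      using card_path_ends(1)[OF C(1) P0(1)] root_labellings_eq_on_path_ends[OF C(1) P0] by blast
    show "card (path_ends C P0) \<le> pc n E - 1" using card_path_ends(2)[OF C(1) P0(1)] C(2) by simp
  qed
qed

end

section \<open>The Perron vector\<close>

lemma compactin_standard_simplex:
  "compactin (product_topology (\<lambda>_. euclideanreal) UNIV)
     {x :: nat \<Rightarrow> real. (\<forall>i. 0 \<le> x i) \<and> (\<forall>i. n \<le> i \<longrightarrow> x i = 0) \<and> (\<Sum>i<n. x i) = 1}"
  (is "compactin ?X ?D")
proof -
  define Q where "Q = PiE UNIV (\<lambda>i::nat. if i < n then {0..1::real} else {0})"
  have Q: "compactin ?X Q" unfolding Q_def by (subst compactin_PiE) auto
  have "continuous_map ?X euclideanreal (\<lambda>x. \<Sum>i<n. x i)"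
    by (intro continuous_map_sum continuous_map_product_projection) auto
  then have "closedin ?X {x \<in> topspace ?X. (\<Sum>i<n. x i) \<in> {1}}"
    by (rule closedin_continuous_map_preimage) auto
  from closed_Int_compactin[OF this Q]
  have "compactin ?X (Q \<inter> {x \<in> topspace ?X. (\<Sum>i<n. x i) \<in> {1}})"
    by (simp add: Int_commute)
  moreover have "?D = Q \<inter> {x \<in> topspace ?X. (\<Sum>i<n. x i) \<in> {1}}"
  proof (intro Set.set_eqI iffI)
    fix x assume x: "x \<in> ?D"
    have "x i \<le> 1" if "i < n" for i
      using x member_le_sum[of i "{..<n}" x] that by auto
    then show "x \<in> Q \<inter> {x \<in> topspace ?X. (\<Sum>i<n. x i) \<in> {1}}"
      using x unfolding Q_def by (auto simp: PiE_def Pi_def extensional_def not_less)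
  next
    fix x assume x: "x \<in> Q \<inter> {x \<in> topspace ?X. (\<Sum>i<n. x i) \<in> {1}}"
    then have mem: "x i \<in> (if i < n then {0..1} else {0})" for i
      unfolding Q_def by (auto simp: PiE_def Pi_def)
    have "0 \<le> x i \<and> (n \<le> i \<longrightarrow> x i = 0)" for i using mem[of i] by (cases "i < n") auto
    then show "x \<in> ?D" using x by auto
  qed
  ultimately show ?thesis by simp
qed

lemma ratio_increase_by_small_perturbation:
  fixes f S P c :: real
  assumes "0 \<le> f" "0 < S" "0 < P" "0 \<le> c" "k < m"
  obtains \<delta> where "0 < \<delta>" "\<delta> \<le> 1" "f / S < (f + \<delta> ^ k * P) / (S + c * \<delta> ^ m)"
proof
  define \<delta> where "\<delta> = min 1 (P * S / (2 * (f * c + 1)))"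
  have fc: "0 < f * c + 1" using assms by (simp add: add_nonneg_pos)
  show \<delta>: "0 < \<delta>" "\<delta> \<le> 1" unfolding \<delta>_def using assms fc by auto
  have "f * c * \<delta> \<le> f * c * (P * S / (2 * (f * c + 1)))"
    unfolding \<delta>_def using assms by (intro mult_left_mono) auto
  also have "\<dots> = P * S * (f * c / (2 * (f * c + 1)))" by simp
  also have "\<dots> < P * S * 1"
    using assms fc by (intro mult_strict_left_mono) (auto simp: field_simps)
  finally have small: "f * c * \<delta> < P * S" by simp
  have "\<delta> ^ m = \<delta> ^ k * \<delta> ^ (m - k)" using assms by (simp add: power_add[symmetric])
  also have "\<dots> \<le> \<delta> ^ k * \<delta>"
    using \<delta> assms power_decreasing[of 1 "m - k" \<delta>] by (intro mult_left_mono) auto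
  finally have "f * (c * \<delta> ^ m) \<le> \<delta> ^ k * (f * c * \<delta>)"
    using assms by (simp add: mult_left_mono mult.assoc mult.left_commute)
  also have "\<dots> < \<delta> ^ k * (P * S)" using small \<delta> by simp
  finally have "f * (S + c * \<delta> ^ m) < (f + \<delta> ^ k * P) * S" by (simp add: algebra_simps)
  then show "f / S < (f + \<delta> ^ k * P) / (S + c * \<delta> ^ m)"
    using assms \<delta> by (simp add: field_simps add_pos_nonneg)
qed

context connected_uniform_hypergraph
begin

text \<open>
  The Perron vector is a maximizer of the Rayleigh quotient over the nonnegative vectors;
  at a positive maximizer the Lagrange condition is the eigenvalue equation of the adjacency tensor
  with eigenvalue m times the maximum.
\<close>

definition edge_form :: "(nat \<Rightarrow> real) \<Rightarrow> real" where
  "edge_form z = (\<Sum>e\<in>E. \<Prod>j\<in>e. z j)"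

definition power_sum :: "(nat \<Rightarrow> real) \<Rightarrow> real" where
  "power_sum z = (\<Sum>i<n. z i ^ m)"

definition rayleigh_quotient :: "(nat \<Rightarrow> real) \<Rightarrow> real" where
  "rayleigh_quotient z = edge_form z / power_sum z"

definition admissible :: "(nat \<Rightarrow> real) \<Rightarrow> bool" where
  "admissible z \<longleftrightarrow> (\<forall>i. 0 \<le> z i) \<and> (\<forall>i. n \<le> i \<longrightarrow> z i = 0) \<and> (\<exists>i<n. 0 < z i)"

lemma edge_form_nonneg: "(\<And>i. 0 \<le> z i) \<Longrightarrow> 0 \<le> edge_form z"
  unfolding edge_form_def by (intro sum_nonneg prod_nonneg) auto

lemma power_sum_pos: "admissible z \<Longrightarrow> 0 < power_sum z"
  unfolding admissible_def power_sum_def by (auto intro!: sum_pos2)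

lemma rayleigh_quotient_scale:
  assumes "c \<noteq> 0"
  shows "rayleigh_quotient (\<lambda>i. c * z i) = rayleigh_quotient z"
proof -
  have "edge_form (\<lambda>i. c * z i) = c ^ m * edge_form z"
    unfolding edge_form_def using card_edge by (simp add: prod.distrib sum_distrib_left)
  moreover have "power_sum (\<lambda>i. c * z i) = c ^ m * power_sum z"
    unfolding power_sum_def by (simp add: sum_distrib_left power_mult_distrib)
  ultimately show ?thesis unfolding rayleigh_quotient_def using assms by simp
qed

lemma rayleigh_quotient_attains_max:
  obtains x where "admissible x" "\<And>z. admissible z \<Longrightarrow> rayleigh_quotient z \<le> rayleigh_quotient x"
proof -
  let ?X = "product_topology (\<lambda>_::nat. euclideanreal) UNIV"
  define D where "D = {x :: nat \<Rightarrow> real. (\<forall>i. 0 \<le> x i) \<and> (\<forall>i. n \<le> i \<longrightarrow> x i = 0) \<and> (\<Sum>i<n. x i) = 1}"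
  have D_admissible: "admissible x" if "x \<in> D" for x
  proof -
    have "\<not> (\<forall>i<n. x i = 0)"
    proof
      assume "\<forall>i<n. x i = 0"
      then have "(\<Sum>i<n. x i) = 0" by simp
      then show False using that unfolding D_def by simp
    qed
    then show ?thesis using that unfolding D_def admissible_def by (auto simp: less_eq_real_def)
  qed
  have proj: "continuous_map ?X euclideanreal (\<lambda>x. x i)" for i
    using continuous_map_product_projection[of i UNIV "\<lambda>_. euclideanreal"] by simp
  have "power_sum z \<noteq> 0" if "z \<in> D" for z
    using D_admissible[OF that] power_sum_pos by force
  moreover have "continuous_map ?X euclideanreal edge_form"
    unfolding edge_form_def
    by (intro continuous_map_sum continuous_map_prod proj finite_edges) (auto intro: finite_edge)
  moreover have "continuous_map ?X euclideanreal power_sum"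
    unfolding power_sum_def by (intro continuous_map_sum continuous_map_real_pow proj) auto
  ultimately have "continuous_map (subtopology ?X D) euclideanreal rayleigh_quotient"
    unfolding rayleigh_quotient_def
    by (intro continuous_map_real_divide continuous_map_from_subtopology) auto
  then have "compactin euclideanreal (rayleigh_quotient ` D)"
    using compactin_standard_simplex[of n]
    by (intro image_compactin) (auto simp: compactin_subtopology D_def)
  then have "compact (rayleigh_quotient ` D)" by simp
  moreover have "(\<lambda>i. if i = 0 then 1 else 0) \<in> D" unfolding D_def using n_pos by auto
  ultimately obtain x where x: "x \<in> D" "\<And>z. z \<in> D \<Longrightarrow> rayleigh_quotient z \<le> rayleigh_quotient x"
    using compact_attains_sup[of "rayleigh_quotient ` D"] by blast
  show thesis
  proof (rule that[OF D_admissible[OF x(1)]])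
    fix z assume z: "admissible z"
    define s where "s = (\<Sum>i<n. z i)"
    have s: "0 < s" unfolding s_def using z unfolding admissible_def by (auto intro!: sum_pos2)
    have "(\<lambda>i. z i / s) \<in> D"
      using z s unfolding D_def admissible_def by (auto simp: s_def sum_divide_distrib[symmetric])
    moreover have "rayleigh_quotient (\<lambda>i. z i / s) = rayleigh_quotient z"
      using rayleigh_quotient_scale[of "1 / s" z] s by simp
    ultimately show "rayleigh_quotient z \<le> rayleigh_quotient x" using x(2) by metis
  qed
qed

lemma admissible_mono:
  assumes "admissible x" "\<And>j. x j \<le> y j" "\<And>j. n \<le> j \<Longrightarrow> y j = 0"
  shows "admissible y"
  unfolding admissible_def
proof (intro conjI allI impI)
  show "0 \<le> y j" for j using assms(1) assms(2)[of j] unfolding admissible_def by (meson order_trans)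
  show "\<exists>j<n. 0 < y j" using assms(1,2) unfolding admissible_def by (meson less_le_trans)
qed (rule assms(3))

lemma rayleigh_quotient_maximizer_positive:
  assumes x: "admissible x" and max: "\<And>z. admissible z \<Longrightarrow> rayleigh_quotient z \<le> rayleigh_quotient x"
    and i: "i < n"
  shows "0 < x i"
proof (rule ccontr)
  assume "\<not> 0 < x i"
  define Z where "Z = {j. j < n \<and> x j = 0}"
  have x_nonneg: "\<And>j. 0 \<le> x j" and x_out: "\<And>j. n \<le> j \<Longrightarrow> x j = 0"
    using x unfolding admissible_def by auto
  have "i \<in> Z" using \<open>\<not> 0 < x i\<close> i x_nonneg[of i] unfolding Z_def by simp
  obtain b where b: "b < n" "0 < x b" using x unfolding admissible_def by blast
  then have "b \<notin> Z" unfolding Z_def by simp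
  obtain e a c where e: "e \<in> E" "a \<in> e" "c \<in> e" "a \<in> Z" "c \<notin> Z"
    using edge_crossing[OF i b(1) \<open>i \<in> Z\<close> \<open>b \<notin> Z\<close>] by blast
  \<comment> \<open>Raising the zero coordinates to a small \<open>\<delta>\<close> gains \<open>\<delta>^k\<close> with \<open>k < m\<close> on the edge
    \<open>e\<close> but costs only \<open>\<delta>^m\<close> per coordinate in the power sum.\<close>
  define k where "k = card (e \<inter> Z)"
  have "e \<inter> Z \<subset> e" using e by blast
  then have "k < m" unfolding k_def using psubset_card_mono[OF finite_edge] card_edge e(1) by metis
  define P where "P = (\<Prod>j\<in>e - Z. x j)"
  have "0 < P" unfolding P_def
    using e edge_subset x_nonneg unfolding Z_def by (intro prod_pos) (force simp: less_eq_real_def)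
  have "0 \<le> edge_form x" using x_nonneg by (rule edge_form_nonneg)
  obtain \<delta> :: real where \<delta>: "0 < \<delta>" "\<delta> \<le> 1"
    and increase: "edge_form x / power_sum x < (edge_form x + \<delta> ^ k * P) / (power_sum x + card Z * \<delta> ^ m)"
    using ratio_increase_by_small_perturbation[where c = "real (card Z)",
        OF \<open>0 \<le> edge_form x\<close> power_sum_pos[OF x] \<open>0 < P\<close> _ \<open>k < m\<close>]
    by auto
  define y where "y j = (if j \<in> Z then \<delta> else x j)" for j
  have x_le_y: "x j \<le> y j" for j unfolding y_def Z_def using \<delta> by auto
  have "admissible y"
  proof (rule admissible_mono[OF x x_le_y])
    show "y j = 0" if "n \<le> j" for j
    proof -
      have "j \<notin> Z" using that unfolding Z_def by simp
      then show ?thesis using x_out[OF that] unfolding y_def by simp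
    qed
  qed
  have "(\<Prod>j\<in>e. y j) = \<delta> ^ k * P"
    using finite_edge[OF e(1)] unfolding k_def P_def y_def by (simp add: prod.Int_Diff[of e _ Z])
  moreover have "(\<Prod>j\<in>e. x j) = 0" using e finite_edge[OF e(1)] unfolding Z_def by (auto simp: prod_zero_iff)
  moreover have "(\<Sum>e'\<in>E - {e}. \<Prod>j\<in>e'. x j) \<le> (\<Sum>e'\<in>E - {e}. \<Prod>j\<in>e'. y j)"
    using x_nonneg x_le_y by (intro sum_mono prod_mono) auto
  ultimately have "edge_form x + \<delta> ^ k * P \<le> edge_form y"
    unfolding edge_form_def using e(1) finite_edges by (simp add: sum.remove)
  moreover have "power_sum y = power_sum x + card Z * \<delta> ^ m"
  proof -
    have "power_sum y = (\<Sum>j<n. x j ^ m + (if j \<in> Z then \<delta> ^ m else 0))"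
      unfolding power_sum_def y_def Z_def using two_le_m by (intro sum.cong) auto
    also have "\<dots> = power_sum x + (\<Sum>j\<in>Z. \<delta> ^ m)"
      unfolding power_sum_def Z_def by (simp add: sum.distrib sum.If_cases Int_def conj_commute)
    finally show ?thesis by simp
  qed
  moreover have "0 \<le> power_sum x + card Z * \<delta> ^ m" using power_sum_pos[OF x] \<delta> by simp
  ultimately have "(edge_form x + \<delta> ^ k * P) / (power_sum x + card Z * \<delta> ^ m) \<le> rayleigh_quotient y"
    unfolding rayleigh_quotient_def by (simp add: divide_right_mono)
  then have "rayleigh_quotient x < rayleigh_quotient y"
    using increase unfolding rayleigh_quotient_def by linarith
  then show False using max[OF \<open>admissible y\<close>] by simp
qed

lemma edge_form_update:
  "edge_form (x(i := t)) = (\<Sum>e\<in>{e\<in>E. i \<notin> e}. \<Prod>j\<in>e. x j) + t * (\<Sum>e\<in>{e\<in>E. i \<in> e}. \<Prod>j\<in>e - {i}. x j)"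
proof -
  have "edge_form (x(i := t)) = (\<Sum>e\<in>E. if i \<in> e then t * (\<Prod>j\<in>e - {i}. x j) else \<Prod>j\<in>e. x j)"
    unfolding edge_form_def
  proof (rule sum.cong[OF refl])
    fix e assume e: "e \<in> E"
    show "(\<Prod>j\<in>e. (x(i := t)) j) = (if i \<in> e then t * (\<Prod>j\<in>e - {i}. x j) else \<Prod>j\<in>e. x j)"
    proof (cases "i \<in> e")
      case True
      then show ?thesis using prod_edge_remove[OF e True, of "x(i := t)"] by (auto intro!: prod.cong)
    qed (auto intro!: prod.cong)
  qed
  also have "\<dots> = (\<Sum>e\<in>{e\<in>E. i \<notin> e}. \<Prod>j\<in>e. x j) + t * (\<Sum>e\<in>{e\<in>E. i \<in> e}. \<Prod>j\<in>e - {i}. x j)"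
    using finite_edges by (simp add: sum.If_cases sum_distrib_left Int_def conj_commute add.commute)
  finally show ?thesis .
qed

lemma power_sum_update:
  assumes "i < n"
  shows "power_sum (x(i := t)) = (\<Sum>j\<in>{..<n} - {i}. x j ^ m) + t ^ m"
proof -
  have "power_sum (x(i := t)) = t ^ m + (\<Sum>j\<in>{..<n} - {i}. x j ^ m)"
    unfolding power_sum_def using assms by (simp add: sum.remove)
  then show ?thesis by simp
qed

lemma admissible_update:
  assumes "admissible x" "i < n" "0 < t"
  shows "admissible (x(i := t))"
  unfolding admissible_def
proof (intro conjI allI impI)
  show "0 \<le> (x(i := t)) j" for j using assms unfolding admissible_def by simp
  show "(x(i := t)) j = 0" if "n \<le> j" for j
    using assms that unfolding admissible_def by (simp add: not_less[symmetric])
  show "\<exists>j<n. 0 < (x(i := t)) j" using assms by (intro exI[of _ i]) simp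
qed

lemma rayleigh_quotient_maximizer_eigen:
  assumes x: "admissible x" and max: "\<And>z. admissible z \<Longrightarrow> rayleigh_quotient z \<le> rayleigh_quotient x"
    and i: "i < n"
  shows "(\<Sum>e\<in>{e\<in>E. i \<in> e}. \<Prod>j\<in>e - {i}. x j) = m * rayleigh_quotient x * x i ^ (m - 1)"
proof -
  define a where "a = (\<Sum>e\<in>{e\<in>E. i \<notin> e}. \<Prod>j\<in>e. x j)"
  define b where "b = (\<Sum>e\<in>{e\<in>E. i \<in> e}. \<Prod>j\<in>e - {i}. x j)"
  define c where "c = (\<Sum>j\<in>{..<n} - {i}. x j ^ m)"
  define \<rho> where "\<rho> = rayleigh_quotient x"
  have "0 < x i" using rayleigh_quotient_maximizer_positive[OF x max i] .
  have "0 \<le> c" unfolding c_def using x unfolding admissible_def by (intro sum_nonneg) auto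
  define L where "L t = a + b * t - \<rho> * (c + t ^ m)" for t
  have F: "edge_form x = a + b * x i"
    using edge_form_update[where x = x and i = i and t = "x i"] unfolding a_def b_def by simp
  have S: "power_sum x = c + x i ^ m"
    using power_sum_update[OF i, where x = x and t = "x i"] unfolding c_def by simp
  have "0 < c + x i ^ m" using \<open>0 < x i\<close> \<open>0 \<le> c\<close> by (simp add: add_nonneg_pos)
  then have "L (x i) = 0" unfolding L_def \<rho>_def rayleigh_quotient_def F S by simp
  have "L t \<le> L (x i)" if "\<bar>x i - t\<bar> < x i" for t
  proof -
    have "0 < t" using that by auto
    have pos: "0 < c + t ^ m" using \<open>0 \<le> c\<close> \<open>0 < t\<close> by (simp add: add_nonneg_pos)
    have "admissible (x(i := t))" using admissible_update[OF x i \<open>0 < t\<close>] .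
    moreover have "rayleigh_quotient (x(i := t)) = (a + b * t) / (c + t ^ m)"
      unfolding rayleigh_quotient_def edge_form_update power_sum_update[OF i] a_def b_def c_def
      by (simp add: mult.commute)
    ultimately have "(a + b * t) / (c + t ^ m) \<le> \<rho>" using max unfolding \<rho>_def by metis
    then show ?thesis using pos \<open>L (x i) = 0\<close> unfolding L_def by (simp add: divide_le_eq)
  qed
  moreover have "(L has_real_derivative b - \<rho> * (m * x i ^ (m - 1))) (at (x i))"
    unfolding L_def by (auto intro!: derivative_eq_intros)
  ultimately have "b - \<rho> * (m * x i ^ (m - 1)) = 0"
    using \<open>0 < x i\<close> by (intro DERIV_local_max) auto
  then show ?thesis unfolding b_def \<rho>_def by simp
qed

lemma perron_vector_exists:
  obtains p :: "nat \<Rightarrow> real" and r :: real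
  where "\<And>i. i < n \<Longrightarrow> 0 < p i" "p 0 = 1" "0 \<le> r"
    "\<And>i. i < n \<Longrightarrow> (\<Sum>e\<in>{e\<in>E. i \<in> e}. \<Prod>j\<in>e - {i}. p j) = r * p i ^ (m - 1)"
proof -
  obtain x where x: "admissible x" "\<And>z. admissible z \<Longrightarrow> rayleigh_quotient z \<le> rayleigh_quotient x"
    using rayleigh_quotient_attains_max by blast
  have pos: "0 < x i" if "i < n" for i using rayleigh_quotient_maximizer_positive[OF x that] .
  define p where "p j = x j / x 0" for j
  define r where "r = m * rayleigh_quotient x"
  show thesis
  proof (rule that)
    show "0 < p i" if "i < n" for i unfolding p_def using pos[OF that] pos[OF n_pos] by simp
    show "p 0 = 1" unfolding p_def using pos[OF n_pos] by simp
    show "0 \<le> r" unfolding r_def rayleigh_quotient_def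
      using edge_form_nonneg power_sum_pos[OF x(1)] x(1) unfolding admissible_def by simp
    show "(\<Sum>e\<in>{e\<in>E. i \<in> e}. \<Prod>j\<in>e - {i}. p j) = r * p i ^ (m - 1)" if i: "i < n" for i
    proof -
      have "(\<Sum>e\<in>{e\<in>E. i \<in> e}. \<Prod>j\<in>e - {i}. p j)
          = (\<Sum>e\<in>{e\<in>E. i \<in> e}. (\<Prod>j\<in>e - {i}. x j) / x 0 ^ (m - 1))"
        unfolding p_def using card_edge by (intro sum.cong refl) (simp add: prod_dividef finite_edge)
      then have "(\<Sum>e\<in>{e\<in>E. i \<in> e}. \<Prod>j\<in>e - {i}. p j)
          = (\<Sum>e\<in>{e\<in>E. i \<in> e}. \<Prod>j\<in>e - {i}. x j) / x 0 ^ (m - 1)"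
        by (simp add: sum_divide_distrib)
      then show ?thesis
        using rayleigh_quotient_maximizer_eigen[OF x i] unfolding p_def r_def by (simp add: power_divide)
    qed
  qed
qed

end

section \<open>Eigenvectors of the spectral radius\<close>

locale hypergraph_perron_vector = connected_uniform_hypergraph +
  fixes p :: "nat \<Rightarrow> real" and r :: real
  assumes p_pos: "\<And>i. i < n \<Longrightarrow> 0 < p i" and p_0: "p 0 = 1" and r_nonneg: "0 \<le> r"
    and p_eigen: "\<And>i. i < n \<Longrightarrow> (\<Sum>e\<in>{e\<in>E. i \<in> e}. \<Prod>j\<in>e - {i}. p j) = r * p i ^ (m - 1)"
begin

definition scaled :: "(nat \<Rightarrow> complex) \<Rightarrow> nat \<Rightarrow> complex" where
  "scaled c i = (if i < n then c i * of_real (p i) else 0)"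

definition phase :: "(nat \<Rightarrow> complex) \<Rightarrow> nat \<Rightarrow> complex" where
  "phase y i = (if i < n then y i / of_real (p i) else 1)"

lemma phase_scaled: "i < n \<Longrightarrow> phase (scaled c) i = c i"
  unfolding phase_def scaled_def using p_pos[of i] by simp

lemma eigenpair_scaled_one: "is_eigenpair m n (adj_tensor m E) (of_real r) (scaled (\<lambda>_. 1))"
proof -
  have "tensor_apply m n (adj_tensor m E) (scaled (\<lambda>_. 1)) i = of_real r * scaled (\<lambda>_. 1) i ^ (m - 1)"
    if "i < n" for i
  proof -
    have "tensor_apply m n (adj_tensor m E) (scaled (\<lambda>_. 1)) i
        = of_real (\<Sum>e\<in>{e\<in>E. i \<in> e}. \<Prod>j\<in>e - {i}. p j)"
      unfolding tensor_apply_adj scaled_def using edge_subset by (force intro!: sum.cong prod.cong)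
    then show ?thesis using p_eigen that unfolding scaled_def by simp
  qed
  moreover have "scaled (\<lambda>_. 1) 0 \<noteq> 0" using n_pos p_0 unfolding scaled_def by simp
  moreover have "scaled (\<lambda>_. 1) i = 0" if "n \<le> i" for i using that unfolding scaled_def by simp
  ultimately show ?thesis using n_pos unfolding is_eigenpair_def by blast
qed

lemma norm_tensor_apply_le:
  assumes "i < n" "\<And>j. j < n \<Longrightarrow> cmod (x j) \<le> t * p j"
  shows "cmod (tensor_apply m n (adj_tensor m E) x i)
      \<le> (\<Sum>e\<in>{e\<in>E. i \<in> e}. \<Prod>j\<in>e - {i}. cmod (x j))"
    and "(\<Sum>e\<in>{e\<in>E. i \<in> e}. \<Prod>j\<in>e - {i}. cmod (x j)) \<le> t ^ (m - 1) * (r * p i ^ (m - 1))"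
proof -
  show "cmod (tensor_apply m n (adj_tensor m E) x i) \<le> (\<Sum>e\<in>{e\<in>E. i \<in> e}. \<Prod>j\<in>e - {i}. cmod (x j))"
    unfolding tensor_apply_adj by (rule order_trans[OF norm_sum]) (simp add: prod_norm)
  have "(\<Sum>e\<in>{e\<in>E. i \<in> e}. \<Prod>j\<in>e - {i}. cmod (x j)) \<le> (\<Sum>e\<in>{e\<in>E. i \<in> e}. \<Prod>j\<in>e - {i}. t * p j)"
    using assms(2) edge_subset by (intro sum_mono prod_mono) force
  also have "\<dots> = (\<Sum>e\<in>{e\<in>E. i \<in> e}. t ^ (m - 1) * (\<Prod>j\<in>e - {i}. p j))"
    using card_edge_remove by (intro sum.cong) (auto simp: prod.distrib)
  also have "\<dots> = t ^ (m - 1) * (r * p i ^ (m - 1))"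
    using p_eigen assms(1) by (simp add: sum_distrib_left[symmetric])
  finally show "(\<Sum>e\<in>{e\<in>E. i \<in> e}. \<Prod>j\<in>e - {i}. cmod (x j)) \<le> t ^ (m - 1) * (r * p i ^ (m - 1))" .
qed

lemma maximal_ratio:
  assumes "\<exists>j<n. x j \<noteq> 0"
  obtains t i where "0 < t" "i < n" "cmod (x i) = t * p i" "\<And>j. j < n \<Longrightarrow> cmod (x j) \<le> t * p j"
proof -
  define R where "R = (\<lambda>j. cmod (x j) / p j) ` {..<n}"
  have R: "finite R" "R \<noteq> {}" unfolding R_def using n_pos by auto
  then have "Max R \<in> R" by (rule Max_in)
  then obtain i where i: "i < n" "Max R = cmod (x i) / p i" unfolding R_def by blast
  have le: "cmod (x j) / p j \<le> Max R" if "j < n" for j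
    using R(1) that unfolding R_def by (intro Max_ge) auto
  obtain j where j: "j < n" "x j \<noteq> 0" using assms by blast
  have "0 < cmod (x j) / p j" using j p_pos[OF j(1)] by simp
  then have "0 < Max R" using le[OF j(1)] by linarith
  moreover have "cmod (x j) \<le> Max R * p j" if "j < n" for j
    using le[OF that] p_pos[OF that] by (simp add: divide_le_eq)
  moreover have "cmod (x i) = Max R * p i" using i p_pos[OF i(1)] by simp
  ultimately show thesis using that i(1) by blast
qed

lemma eigenvalue_norm_le:
  assumes "is_eigenpair m n (adj_tensor m E) lam x"
  shows "cmod lam \<le> r"
proof -
  obtain t i where ti: "0 < t" "i < n" "cmod (x i) = t * p i" "\<And>j. j < n \<Longrightarrow> cmod (x j) \<le> t * p j"
    using maximal_ratio assms unfolding is_eigenpair_def by blast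
  have "cmod lam * cmod (x i) ^ (m - 1) = cmod (tensor_apply m n (adj_tensor m E) x i)"
    using assms ti(2) unfolding is_eigenpair_def by (simp add: norm_mult norm_power)
  also have "\<dots> \<le> t ^ (m - 1) * (r * p i ^ (m - 1))"
    using norm_tensor_apply_le[OF ti(2,4)] by (rule order_trans)
  also have "\<dots> = r * cmod (x i) ^ (m - 1)" using ti(3) by (simp add: power_mult_distrib)
  finally show ?thesis using ti p_pos[of i] by simp
qed

lemma spectral_radius_adj_tensor: "spectral_radius m n (adj_tensor m E) = r"
  unfolding spectral_radius_def
proof (rule cSup_eq_maximum)
  show "r \<in> {cmod lam |lam. \<exists>x. is_eigenpair m n (adj_tensor m E) lam x}"
    using eigenpair_scaled_one r_nonneg by force
qed (use eigenvalue_norm_le in blast)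

lemma rho_eigvecs_iff:
  "y \<in> rho_eigvecs m n (adj_tensor m E) \<longleftrightarrow> is_eigenpair m n (adj_tensor m E) (of_real r) y \<and> y 0 = 1"
  unfolding rho_eigvecs_def spectral_radius_adj_tensor by simp

end

context hypergraph_perron_vector
begin

text \<open>
  Equality in \<open>|(\<A> y\<^sup>m\<^sup>-\<^sup>1)\<^sub>a| \<le> \<Sum>\<^sub>e \<Prod>\<^sub>j |y\<^sub>j| \<le> \<Sum>\<^sub>e \<Prod>\<^sub>j t p\<^sub>j\<close> at a vertex where \<open>|y|/p\<close>
  is maximal forces the maximum at all neighbours.
\<close>

lemma maximal_ratio_propagates:
  assumes eig: "is_eigenpair m n (adj_tensor m E) (of_real r) y"
    and bound: "\<And>j. j < n \<Longrightarrow> cmod (y j) \<le> t * p j" and "0 < t"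
    and a: "a < n" "cmod (y a) = t * p a" and e: "e \<in> E" "a \<in> e" "b \<in> e"
  shows "cmod (y b) = t * p b"
proof (cases "b = a")
  case False
  let ?S = "{e\<in>E. a \<in> e}"
  define V where "V e = (\<Prod>j\<in>e - {a}. cmod (y j))" for e
  define W where "W e = (\<Prod>j\<in>e - {a}. t * p j)" for e
  have "sum W ?S = (\<Sum>e\<in>?S. t ^ (m - 1) * (\<Prod>j\<in>e - {a}. p j))"
    unfolding W_def using card_edge_remove by (intro sum.cong) (auto simp: prod.distrib)
  also have "\<dots> = t ^ (m - 1) * (r * p a ^ (m - 1))"
    using p_eigen[OF a(1)] by (simp add: sum_distrib_left[symmetric])
  finally have W: "sum W ?S = t ^ (m - 1) * (r * p a ^ (m - 1))" .
  have "sum W ?S = cmod (tensor_apply m n (adj_tensor m E) y a)"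
    using eig a r_nonneg unfolding W is_eigenpair_def by (simp add: norm_mult norm_power power_mult_distrib)
  also have "\<dots> \<le> sum V ?S" unfolding V_def by (rule norm_tensor_apply_le(1)[OF a(1) bound])
  finally have "sum W ?S \<le> sum V ?S" .
  moreover have "sum V ?S \<le> sum W ?S"
    unfolding W V_def by (rule norm_tensor_apply_le(2)[OF a(1) bound])
  ultimately have "sum V ?S = sum W ?S" by simp
  moreover have "V e' \<le> W e'" if "e' \<in> ?S" for e'
    unfolding V_def W_def using that bound edge_subset by (intro prod_mono) force
  ultimately have "V e = W e"
    using e finite_edges sum_mono_eq_imp_eq[of ?S V W e] by auto
  moreover have "0 < t * p j" if "j \<in> e - {a}" for j
    using that e(1) edge_subset p_pos \<open>0 < t\<close> by force
  ultimately show ?thesis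
    unfolding V_def W_def using e False finite_edge bound edge_subset
    by (intro prod_mono_eq_imp_eq[of "e - {a}" "\<lambda>j. cmod (y j)" "\<lambda>j. t * p j"]) force+
qed (use a in simp)

lemma rho_eigvec_norm:
  assumes y: "y \<in> rho_eigvecs m n (adj_tensor m E)" and v: "v < n"
  shows "cmod (y v) = p v"
proof -
  have eig: "is_eigenpair m n (adj_tensor m E) (of_real r) y" and "y 0 = 1"
    using y rho_eigvecs_iff by auto
  obtain t i where ti: "0 < t" "i < n" "cmod (y i) = t * p i" "\<And>j. j < n \<Longrightarrow> cmod (y j) \<le> t * p j"
    using maximal_ratio eig unfolding is_eigenpair_def by blast
  have all: "cmod (y u) = t * p u" if "u < n" for u
  proof (rule connected_induct[OF ti(2) that, where P = "\<lambda>v. cmod (y v) = t * p v"])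
    show "cmod (y i) = t * p i" by (rule ti(3))
    show "cmod (y b) = t * p b" if "e \<in> E" "a \<in> e" "b \<in> e" "cmod (y a) = t * p a" for a b e
      using maximal_ratio_propagates[where y = y and t = t, OF eig ti(4) ti(1) _ that(4) that(1-3)]
        edge_subset that(1,2) by blast
  qed
  then have "t = 1" using all[OF n_pos] \<open>y 0 = 1\<close> p_0 by simp
  then show ?thesis using all[OF v] by simp
qed

lemma rho_eigvec_scaled_phase:
  assumes "y \<in> rho_eigvecs m n (adj_tensor m E)"
  shows "y = scaled (phase y)" "\<And>i. i < n \<Longrightarrow> cmod (phase y i) = 1"
proof -
  show "y = scaled (phase y)"
  proof
    fix i
    show "y i = scaled (phase y) i"
    proof (cases "i < n")
      case True
      then show ?thesis using p_pos[OF True] unfolding scaled_def phase_def by simp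
    next
      case False
      then show ?thesis using assms rho_eigvecs_iff unfolding scaled_def is_eigenpair_def by simp
    qed
  qed
  show "cmod (phase y i) = 1" if "i < n" for i
    using rho_eigvec_norm[OF assms that] p_pos[OF that] that unfolding phase_def by (simp add: norm_divide)
qed

lemma rho_eigvec_phase_stabilizing:
  assumes y: "y \<in> rho_eigvecs m n (adj_tensor m E)"
  shows "stabilizing (phase y)"
proof -
  let ?d = "phase y"
  have eig: "is_eigenpair m n (adj_tensor m E) (of_real r) y" and "y 0 = 1"
    using y rho_eigvecs_iff by auto
  have unit: "cmod (?d i) = 1" if "i < n" for i using rho_eigvec_scaled_phase(2)[OF y that] .
  have "(\<Prod>j\<in>e - {i}. ?d j) = ?d i ^ (m - 1)" if e: "e \<in> E" "i \<in> e" for e i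
  proof -
    have i: "i < n" using e edge_subset by auto
    let ?S = "{e\<in>E. i \<in> e}"
    define w where "w e = (\<Prod>j\<in>e - {i}. p j)" for e
    define u where "u e = (\<Prod>j\<in>e - {i}. ?d j) / ?d i ^ (m - 1)" for e
    have di: "?d i \<noteq> 0" using unit[OF i] by auto
    have y_eq: "y j = ?d j * of_real (p j)" if "j < n" for j
      using fun_cong[OF rho_eigvec_scaled_phase(1)[OF y], of j] that unfolding scaled_def by simp
    have "(\<Prod>j\<in>e - {i}. y j) = (\<Prod>j\<in>e - {i}. ?d j) * of_real (w e)" if "e \<in> ?S" for e
    proof -
      have "(\<Prod>j\<in>e - {i}. y j) = (\<Prod>j\<in>e - {i}. ?d j * of_real (p j))"
        using that edge_subset y_eq by (intro prod.cong) auto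
      then show ?thesis unfolding w_def by (simp add: prod.distrib)
    qed
    then have "(\<Sum>e\<in>?S. (\<Prod>j\<in>e - {i}. ?d j) * of_real (w e)) = tensor_apply m n (adj_tensor m E) y i"
      unfolding tensor_apply_adj by simp
    also have "\<dots> = of_real r * (?d i * of_real (p i)) ^ (m - 1)"
      using eig i y_eq[OF i] unfolding is_eigenpair_def by simp
    also have "\<dots> = ?d i ^ (m - 1) * of_real (\<Sum>e\<in>?S. w e)"
      using p_eigen[OF i] unfolding w_def by (simp add: power_mult_distrib)
    finally have "(\<Sum>e\<in>?S. u e * of_real (w e)) = of_real (\<Sum>e\<in>?S. w e)"
      unfolding u_def using di by (simp add: sum_divide_distrib[symmetric] field_simps)
    moreover have "cmod (u e) = 1" if "e \<in> ?S" for e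
      using that unit i edge_subset unfolding u_def
      by (auto simp: norm_divide norm_power prod_norm[symmetric] intro!: prod.neutral)
    moreover have "0 < w e" if "e \<in> ?S" for e
      unfolding w_def using that edge_subset p_pos by (intro prod_pos) force
    ultimately have "u e = 1" using e finite_edges
      by (intro unimodular_weighted_sum_eq_imp_one[of ?S u w]) auto
    then show ?thesis using di unfolding u_def by simp
  qed
  moreover have "?d 0 = 1" using \<open>y 0 = 1\<close> n_pos p_0 unfolding phase_def by simp
  ultimately show ?thesis using unit unfolding stabilizing_def by force
qed

lemma pos_eigvec_adj_tensor: "pos_eigvec m n (adj_tensor m E) = scaled (\<lambda>_. 1)"
  unfolding pos_eigvec_def
proof (rule the_equality)
  show "scaled (\<lambda>_. 1) \<in> rho_eigvecs m n (adj_tensor m E) \<and> (\<forall>i<n. scaled (\<lambda>_. 1) i \<in> \<real> \<and> 0 < Re (scaled (\<lambda>_. 1) i))"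
    using eigenpair_scaled_one rho_eigvecs_iff p_0 p_pos n_pos unfolding scaled_def by auto
next
  fix y assume y: "y \<in> rho_eigvecs m n (adj_tensor m E) \<and> (\<forall>i<n. y i \<in> \<real> \<and> 0 < Re (y i))"
  have "phase y i = 1" if "i < n" for i
  proof -
    have "y i \<in> \<real>\<^sub>\<ge>\<^sub>0" using y that by (auto simp: complex_is_Real_iff nonneg_Reals_def complex_eq_iff)
    then obtain s where s: "y i = of_real s" "0 \<le> s" by (auto simp: nonneg_Reals_def)
    then have "phase y i = of_real (s / p i)"
      using p_pos[OF that] that unfolding phase_def by simp
    then show ?thesis using rho_eigvec_scaled_phase(2)[OF conjunct1[OF y] that] s(2) p_pos[OF that]
      by (simp add: norm_divide)
  qed
  then show "y = scaled (\<lambda>_. 1)"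
    using rho_eigvec_scaled_phase(1)[OF conjunct1[OF y]] by (auto simp: scaled_def fun_eq_iff)
qed

lemma eig_op_scaled:
  assumes "\<And>i. i < n \<Longrightarrow> cmod (c i) = 1" "\<And>i. i < n \<Longrightarrow> cmod (c' i) = 1"
  shows "eig_op m n (adj_tensor m E) (scaled c) (scaled c') = scaled (\<lambda>i. c i * c' i)"
proof
  fix i
  have "scaled c i / of_real (cmod (scaled c i)) = c i" "scaled c' i / of_real (cmod (scaled c' i)) = c' i"
    if "i < n" using assms[OF that] p_pos[OF that] that unfolding scaled_def by (simp_all add: norm_mult)
  then show "eig_op m n (adj_tensor m E) (scaled c) (scaled c') i = scaled (\<lambda>i. c i * c' i) i"
    unfolding eig_op_def pos_eigvec_adj_tensor by (simp add: scaled_def)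
qed

lemma eig_op_scaled_iterate:
  assumes "\<And>i. i < n \<Longrightarrow> cmod (c i) = 1"
  shows "((\<lambda>z. eig_op m n (adj_tensor m E) (scaled c) z) ^^ k) (pos_eigvec m n (adj_tensor m E))
    = scaled (\<lambda>i. c i ^ k)"
proof (induction k)
  case (Suc k)
  then show ?case using eig_op_scaled[of c "\<lambda>i. c i ^ k"] assms by (simp add: norm_power)
qed (simp add: pos_eigvec_adj_tensor)

end

context connected_uniform_hypergraph
begin

lemma restrict_to_root_labelling:
  assumes "root_labelling d" "T \<subseteq> {..<n}"
  shows "restrict_to T d \<in> root_functions m T"
  using assms unfolding root_labelling_def root_functions_def restrict_to_def by auto

lemma determining_set_restrict_to_eq:
  assumes "determining_set T" "root_labelling d" "root_labelling d'" "restrict_to T d = restrict_to T d'"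
    and "v < n"
  shows "d v = d' v"
proof -
  have "d u = d' u" if "u \<in> T" for u using that fun_cong[OF assms(4), of u] unfolding restrict_to_def by simp
  then show ?thesis using assms unfolding determining_set_def by blast
qed

lemma stab_index_le:
  assumes "determining_set T"
  shows "stab_index m n (adj_tensor m E) \<le> enat (m ^ card T)"
proof -
  let ?S = "stab_diagonals m n (adj_tensor m E)"
  have T: "T \<subseteq> {..<n}" using assms unfolding determining_set_def by (rule conjunct1)
  have root: "root_labelling d" if "d \<in> ?S" for d
    using stabilizing_root_labelling[OF stab_diagonals_stabilizing[OF that]] .
  have outside: "d v = 1" if "d \<in> ?S" "n \<le> v" for d v
    using that unfolding stab_diagonals_def by blast
  have inj: "inj_on (restrict_to T) ?S"
  proof (rule inj_onI, rule ext)
    fix d d' v assume d: "d \<in> ?S" "d' \<in> ?S" and eq: "restrict_to T d = restrict_to T d'"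
    show "d v = d' v"
    proof (cases "v < n")
      case True
      then show ?thesis using determining_set_restrict_to_eq[OF assms root[OF d(1)] root[OF d(2)] eq] by blast
    next
      case False
      then show ?thesis using outside[OF d(1)] outside[OF d(2)] by simp
    qed
  qed
  have into: "restrict_to T ` ?S \<subseteq> root_functions m T"
    using restrict_to_root_labelling[OF root T] by blast
  have "finite (root_functions m T)" "card (root_functions m T) = m ^ card T"
    using card_root_functions[of T m] T finite_subset two_le_m by auto
  then have "finite ?S" "card ?S \<le> m ^ card T"
    using inj_on_finite[OF inj into] card_inj_on_le[OF inj into] by auto
  then show ?thesis unfolding stab_index_def by simp
qed

end

context hypergraph_perron_vector
begin

lemma phase_pos_eigvec: "i < n \<Longrightarrow> phase (pos_eigvec m n (adj_tensor m E)) i = 1"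
  unfolding pos_eigvec_adj_tensor by (simp add: phase_scaled)

lemma phase_eig_op:
  assumes y: "y \<in> rho_eigvecs m n (adj_tensor m E)" "y' \<in> rho_eigvecs m n (adj_tensor m E)" and "i < n"
  shows "phase (eig_op m n (adj_tensor m E) y y') i = phase y i * phase y' i"
proof -
  have "eig_op m n (adj_tensor m E) y y' = eig_op m n (adj_tensor m E) (scaled (phase y)) (scaled (phase y'))"
    using rho_eigvec_scaled_phase(1)[OF y(1)] rho_eigvec_scaled_phase(1)[OF y(2)]
    by (rule arg_cong2[where f = "eig_op m n (adj_tensor m E)"])
  also have "\<dots> = scaled (\<lambda>i. phase y i * phase y' i)"
    using rho_eigvec_scaled_phase(2) y by (intro eig_op_scaled)
  finally show ?thesis using phase_scaled[OF \<open>i < n\<close>] by simp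
qed

lemma phase_eig_op_iterate:
  assumes y: "y \<in> rho_eigvecs m n (adj_tensor m E)" and "i < n"
  shows "phase (((\<lambda>z. eig_op m n (adj_tensor m E) y z) ^^ k) (pos_eigvec m n (adj_tensor m E))) i = phase y i ^ k"
proof -
  have "((\<lambda>z. eig_op m n (adj_tensor m E) y z) ^^ k) (pos_eigvec m n (adj_tensor m E))
      = ((\<lambda>z. eig_op m n (adj_tensor m E) (scaled (phase y)) z) ^^ k) (pos_eigvec m n (adj_tensor m E))"
    using rho_eigvec_scaled_phase(1)[OF y]
    by (rule arg_cong[where f = "\<lambda>y. ((\<lambda>z. eig_op m n (adj_tensor m E) y z) ^^ k) (pos_eigvec m n (adj_tensor m E))"])
  also have "\<dots> = scaled (\<lambda>i. phase y i ^ k)"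
    using rho_eigvec_scaled_phase(2) y by (intro eig_op_scaled_iterate)
  finally show ?thesis using phase_scaled[OF \<open>i < n\<close>] by simp
qed

lemma rho_eigvec_phase_root_labelling:
  "y \<in> rho_eigvecs m n (adj_tensor m E) \<Longrightarrow> root_labelling (phase y)"
  using stabilizing_root_labelling rho_eigvec_phase_stabilizing by blast

lemma inj_on_restrict_phase:
  assumes "determining_set T"
  shows "inj_on (\<lambda>y. restrict_to T (phase y)) (rho_eigvecs m n (adj_tensor m E))"
proof (rule inj_onI)
  fix y y' assume y: "y \<in> rho_eigvecs m n (adj_tensor m E)" "y' \<in> rho_eigvecs m n (adj_tensor m E)"
    and eq: "restrict_to T (phase y) = restrict_to T (phase y')"
  have "y = scaled (phase y)" using rho_eigvec_scaled_phase(1)[OF y(1)] .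
  also have "\<dots> = scaled (phase y')"
    using determining_set_restrict_to_eq[OF assms rho_eigvec_phase_root_labelling[OF y(1)]
        rho_eigvec_phase_root_labelling[OF y(2)] eq]
    unfolding scaled_def by auto
  also have "\<dots> = y'" using rho_eigvec_scaled_phase(1)[OF y(2)] by (rule sym)
  finally show "y = y'" .
qed

lemma subgroup_restrict_phase_image:
  assumes T: "T \<subseteq> {..<n}" and H: "eig_submodule m n (adj_tensor m E) H"
  shows "subgroup ((\<lambda>y. restrict_to T (phase y)) ` H) (root_functions_group m T)"
proof (rule subgroup_root_functions_groupI)
  let ?\<Phi> = "\<lambda>y. restrict_to T (phase y)" and ?A = "adj_tensor m E"
  have H_rho: "H \<subseteq> rho_eigvecs m n ?A" using H unfolding eig_submodule_def by blast
  show "0 < m" using two_le_m by simp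
  show "?\<Phi> ` H \<subseteq> root_functions m T"
    using H_rho restrict_to_root_labelling[OF rho_eigvec_phase_root_labelling T] by blast
  have "?\<Phi> (pos_eigvec m n ?A) = (\<lambda>v. 1)"
    using T phase_pos_eigvec unfolding restrict_to_def by (auto simp: fun_eq_iff)
  then show "(\<lambda>v. 1) \<in> ?\<Phi> ` H" using H unfolding eig_submodule_def by (metis image_eqI)
  show "(\<lambda>v. f v * g v) \<in> ?\<Phi> ` H" if fg: "f \<in> ?\<Phi> ` H" "g \<in> ?\<Phi> ` H" for f g
  proof -
    obtain y y' where y: "y \<in> H" "y' \<in> H" "f = ?\<Phi> y" "g = ?\<Phi> y'" using fg by blast
    then have "(\<lambda>v. f v * g v) = ?\<Phi> (eig_op m n ?A y y')"
      using T H_rho phase_eig_op unfolding restrict_to_def by (auto simp: subset_iff fun_eq_iff)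
    then show ?thesis using H y unfolding eig_submodule_def by blast
  qed
  show "(\<lambda>v. f v ^ (m - 1)) \<in> ?\<Phi> ` H" if f: "f \<in> ?\<Phi> ` H" for f
  proof -
    obtain y where y: "y \<in> H" "f = ?\<Phi> y" using f by blast
    then have "(\<lambda>v. f v ^ (m - 1)) = ?\<Phi> (((\<lambda>z. eig_op m n ?A y z) ^^ (m - 1)) (pos_eigvec m n ?A))"
      using T H_rho phase_eig_op_iterate unfolding restrict_to_def by (auto simp: subset_iff fun_eq_iff)
    then show ?thesis using H y unfolding eig_submodule_def by blast
  qed
qed

lemma stab_dim_le:
  assumes "determining_set T"
  shows "stab_dim m n (adj_tensor m E) \<le> enat (card T * cl m)"
proof -
  let ?A = "adj_tensor m E" and ?G = "root_functions_group m T" and ?\<Phi> = "\<lambda>y. restrict_to T (phase y)"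
  have T: "T \<subseteq> {..<n}" using assms unfolding determining_set_def by (rule conjunct1)
  then have root_functions: "finite (root_functions m T)" "card (root_functions m T) = m ^ card T"
    using card_root_functions[of T m] finite_subset two_le_m by auto
  interpret G: group ?G using two_le_m by (intro group_root_functions_group) simp
  have "k \<le> card T * cl m"
    if Hs: "length Hs = k + 1" "\<forall>H\<in>set Hs. eig_submodule m n ?A H" "\<forall>i<k. Hs ! i \<subset> Hs ! (i + 1)" for k Hs
  proof -
    have sub: "eig_submodule m n ?A (Hs ! i)" if "i \<le> k" for i using that Hs(1,2) by simp
    have "k \<le> size (prime_factorization (order ?G))"
    proof (rule G.subgroup_chain_length_le[where H = "\<lambda>i. ?\<Phi> ` (Hs ! i)"])
      show "finite (carrier ?G)" using root_functions by simp
      show "subgroup (?\<Phi> ` (Hs ! i)) ?G" if "i \<le> k" for i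
        using subgroup_restrict_phase_image[OF T sub[OF that]] .
      show "?\<Phi> ` (Hs ! i) \<subset> ?\<Phi> ` (Hs ! Suc i)" if "i < k" for i
      proof -
        have "Hs ! Suc i \<subseteq> rho_eigvecs m n ?A" using sub[of "Suc i"] that unfolding eig_submodule_def by simp
        then show ?thesis using Hs(3) that
          by (intro image_strict_mono inj_on_subset[OF inj_on_restrict_phase[OF assms]]) auto
      qed
    qed
    also have "order ?G = m ^ card T" unfolding order_def using root_functions by simp
    finally show ?thesis
      using size_prime_factorization_power[of m "card T"] two_le_m unfolding cl_def by simp
  qed
  then show ?thesis unfolding stab_dim_def by (auto intro!: Sup_least)
qed

end

theorem theorem4p13:
  fixes m n :: nat and E :: "nat set set"
  assumes "2 \<le> m" and "0 < n"
    and "uniform_hypergraph m n E"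
    and "hg_connected n E"
    and "\<exists>C. path_cover n E C"
  shows "stab_index m n (adj_tensor m E) \<le> enat (m ^ (pc n E - 1)) \<and>
         stab_dim m n (adj_tensor m E) \<le> enat ((pc n E - 1) * cl m)"
proof -
  interpret connected_uniform_hypergraph m n E
    using assms(1-4) by unfold_locales
  obtain T where T: "determining_set T" "card T \<le> pc n E - 1"
    using determining_set_path_cover[OF assms(5)] by blast
  obtain p :: "nat \<Rightarrow> real" and r :: real where "\<And>i. i < n \<Longrightarrow> 0 < p i" "p 0 = 1" "0 \<le> r"
    "\<And>i. i < n \<Longrightarrow> (\<Sum>e\<in>{e\<in>E. i \<in> e}. \<Prod>j\<in>e - {i}. p j) = r * p i ^ (m - 1)"
    using perron_vector_exists by blast
  then interpret hypergraph_perron_vector m n E p r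
    by unfold_locales
  have "stab_index m n (adj_tensor m E) \<le> enat (m ^ card T)"
    using T(1) by (rule stab_index_le)
  also have "\<dots> \<le> enat (m ^ (pc n E - 1))"
    using T(2) assms(1) by (simp add: power_increasing)
  finally have "stab_index m n (adj_tensor m E) \<le> enat (m ^ (pc n E - 1))" .
  moreover have "stab_dim m n (adj_tensor m E) \<le> enat (card T * cl m)"
    using T(1) by (rule stab_dim_le)
  moreover have "enat (card T * cl m) \<le> enat ((pc n E - 1) * cl m)"
    using T(2) by simp
  ultimately show ?thesis by (meson order_trans)
qed

end
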